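(* Let $f$ be a holomorphic quadratic self-map of $\mathbb{P}^2$ preserving the line $\ell=\{z_1=0\}$, written $[z_1:z_2:z_3]\mapsto[z_1\widehat L:z_2\widehat L-\widehat P:z_3\widehat L-\widehat Q]$ with $\widehat L$ linear and $\widehat P,\widehat Q$ quadratic homogeneous forms, and set $L(x,y)=\widehat L(1,x,y)$, $P(x,y)=\widehat P(1,x,y)$, $Q(x,y)=\widehat Q(1,x,y)$. Suppose $f$ has exactly four fixed points $p_1,\dots,p_4$ off $\ell$, all non-degenerate, and let $t_i,d_i$ be the trace and determinant of $\mathbf{I}-Df|_{p_i}$. Then $p_1,\dots,p_4$ are common zeros of $P,Q$ with $L(p_i)\ne0$, the Jacobian matrix of $(P,Q)$ at $p_i$ equals $L(p_i)(\mathbf{I}-Df|_{p_i})$ (in the affine coordinates $(x,y)$ of $[1:x:y]$), and $$\sum_{i=1}^4\frac{1}{L(p_i)^2d_i}=0,\quad \sum_{i=1}^4\frac{x(p_i)}{L(p_i)^2d_i}=0,\quad \sum_{i=1}^4\frac{y(p_i)}{L(p_i)^2d_i}=0,\quad \sum_{i=1}^4\frac{t_i}{L(p_i)d_i}=0,\quad \sum_{i=1}^4\frac{1}{L(p_i)d_i}=0.$$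
   Context: A holomorphic quadratic self-map of $\mathbb{P}^2$ is given by three quadratic homogeneous polynomials without common nontrivial zeros; a fixed point $p$ is non-degenerate if $\det(\mathbf{I}-Df|_p)\ne0$. In the affine chart $z_1\ne0$ with coordinates $[1:x:y]$, $f(x,y)=(x-P/L,\,y-Q/L)$. *)

theory Defs
  imports "HOL-Analysis.Analysis"
begin

definition lin_form3 :: "(complex \<Rightarrow> complex \<Rightarrow> complex \<Rightarrow> complex) \<Rightarrow> bool" where
  "lin_form3 F \<longleftrightarrow> (\<exists>a1 a2 a3. \<forall>u v w. F u v w = a1 * u + a2 * v + a3 * w)"

definition quad_form3 :: "(complex \<Rightarrow> complex \<Rightarrow> complex \<Rightarrow> complex) \<Rightarrow> bool" where
  "quad_form3 F \<longleftrightarrow> (\<exists>c1 c2 c3 c4 c5 c6. \<forall>u v w.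
     F u v w = c1 * u * u + c2 * v * v + c3 * w * w + c4 * u * v + c5 * u * w + c6 * v * w)"

text \<open>The map [z1:z2:z3] \<mapsto> [z1 Lh : z2 Lh - Ph : z3 Lh - Qh] is holomorphic on P^2:
  the three components have no common nontrivial zero.\<close>

definition holo_map :: "(complex \<Rightarrow> complex \<Rightarrow> complex \<Rightarrow> complex) \<Rightarrow>
    (complex \<Rightarrow> complex \<Rightarrow> complex \<Rightarrow> complex) \<Rightarrow>
    (complex \<Rightarrow> complex \<Rightarrow> complex \<Rightarrow> complex) \<Rightarrow> bool" where
  "holo_map Lh Ph Qh \<longleftrightarrow> (\<forall>u v w.
     u * Lh u v w = 0 \<and> v * Lh u v w - Ph u v w = 0 \<and> w * Lh u v w - Qh u v w = 0
     \<longrightarrow> u = 0 \<and> v = 0 \<and> w = 0)"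

text \<open>Fixed point off the line z1 = 0, written as [1:x:y]: the image is a nonzero multiple
  of the representative (1,x,y).\<close>

definition fixed_off :: "(complex \<Rightarrow> complex \<Rightarrow> complex \<Rightarrow> complex) \<Rightarrow>
    (complex \<Rightarrow> complex \<Rightarrow> complex \<Rightarrow> complex) \<Rightarrow>
    (complex \<Rightarrow> complex \<Rightarrow> complex \<Rightarrow> complex) \<Rightarrow> complex \<times> complex \<Rightarrow> bool" where
  "fixed_off Lh Ph Qh q \<longleftrightarrow> (\<exists>c. c \<noteq> 0 \<and>
     1 * Lh 1 (fst q) (snd q) = c * 1 \<and>
     fst q * Lh 1 (fst q) (snd q) - Ph 1 (fst q) (snd q) = c * fst q \<and>
     snd q * Lh 1 (fst q) (snd q) - Qh 1 (fst q) (snd q) = c * snd q)"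

definition pd1 :: "(complex \<Rightarrow> complex \<Rightarrow> complex) \<Rightarrow> complex \<times> complex \<Rightarrow> complex" where
  "pd1 g q = deriv (\<lambda>s. g s (snd q)) (fst q)"

definition pd2 :: "(complex \<Rightarrow> complex \<Rightarrow> complex) \<Rightarrow> complex \<times> complex \<Rightarrow> complex" where
  "pd2 g q = deriv (\<lambda>s. g (fst q) s) (snd q)"

definition jac :: "(complex \<Rightarrow> complex \<Rightarrow> complex) \<Rightarrow> (complex \<Rightarrow> complex \<Rightarrow> complex) \<Rightarrow>
    complex \<times> complex \<Rightarrow> complex^2^2" where
  "jac g1 g2 q = (\<chi> i j. (if i = 1 then (if j = 1 then pd1 g1 q else pd2 g1 q)
                                   else (if j = 1 then pd1 g2 q else pd2 g2 q)))"

definition aff :: "(complex \<Rightarrow> complex \<Rightarrow> complex \<Rightarrow> complex) \<Rightarrow> complex \<Rightarrow> complex \<Rightarrow> complex" where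
  "aff F x y = F 1 x y"

definition Df :: "(complex \<Rightarrow> complex \<Rightarrow> complex \<Rightarrow> complex) \<Rightarrow>
    (complex \<Rightarrow> complex \<Rightarrow> complex \<Rightarrow> complex) \<Rightarrow>
    (complex \<Rightarrow> complex \<Rightarrow> complex \<Rightarrow> complex) \<Rightarrow> complex \<times> complex \<Rightarrow> complex^2^2" where
  "Df Lh Ph Qh q = jac (\<lambda>x y. x - aff Ph x y / aff Lh x y) (\<lambda>x y. y - aff Qh x y / aff Lh x y) q"

definition nondeg where
  "nondeg Lh Ph Qh q \<longleftrightarrow> det (mat 1 - Df Lh Ph Qh q) \<noteq> 0"

end

theory Submission
  imports Defs
begin

text \<open>At a fixed point \<open>[1:x:y]\<close> off the invariant line, \<open>P\<close> and \<open>Q\<close> vanish and the Jacobian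
  matrix of \<open>(P, Q)\<close> is \<open>L (I - Df)\<close>. Hence every sum in the theorem has the form
  \<open>\<Sum> g(p\<^sub>i) / J(p\<^sub>i)\<close>, where \<open>J\<close> is the Jacobian determinant of \<open>(P, Q)\<close> and \<open>g\<close> is
  affine (\<open>1\<close>, \<open>x\<close>, \<open>y\<close>, \<open>L\<close> and \<open>P\<^sub>x + Q\<^sub>y\<close>), and it vanishes by the Euler--Jacobi formula
  for two conics meeting transversally in four points.

  Transversality forbids three collinear
  intersection points. Comparing the two conics along secants shows that \<open>J(p\<^sub>i)\<close> times the
  area of the triangle spanned by the other three points is, up to an alternating sign, the same
  for all \<open>i\<close>. So \<open>\<Sum> g(p\<^sub>i) / J(p\<^sub>i)\<close> is proportional to the cofactor expansion of the
  determinant with rows \<open>(g(p\<^sub>i), 1, x\<^sub>i, y\<^sub>i)\<close>, which is zero because \<open>g\<close> is affine.\<close>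

record 'a conic =
  cst :: 'a
  cx :: 'a
  cy :: 'a
  cxx :: 'a
  cyy :: 'a
  cxy :: 'a

definition conic_eval :: "'a::field conic \<Rightarrow> 'a \<times> 'a \<Rightarrow> 'a" where
  "conic_eval C p = cst C + cx C * fst p + cy C * snd p
     + cxx C * fst p * fst p + cyy C * snd p * snd p + cxy C * fst p * snd p"

definition leading_form :: "'a::field conic \<Rightarrow> 'a \<times> 'a \<Rightarrow> 'a" where
  "leading_form C u = cxx C * fst u * fst u + cyy C * snd u * snd u + cxy C * fst u * snd u"

definition conic_dx :: "'a::field conic \<Rightarrow> 'a \<times> 'a \<Rightarrow> 'a" where
  "conic_dx C p = cx C + 2 * cxx C * fst p + cxy C * snd p"

definition conic_dy :: "'a::field conic \<Rightarrow> 'a \<times> 'a \<Rightarrow> 'a" where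
  "conic_dy C p = cy C + 2 * cyy C * snd p + cxy C * fst p"

definition jacdet :: "'a::field conic \<Rightarrow> 'a conic \<Rightarrow> 'a \<times> 'a \<Rightarrow> 'a" where
  "jacdet A B p = conic_dx A p * conic_dy B p - conic_dy A p * conic_dx B p"

definition leading_wedge :: "'a::field conic \<Rightarrow> 'a conic \<Rightarrow> 'a \<times> 'a \<Rightarrow> 'a \<times> 'a \<Rightarrow> 'a" where
  "leading_wedge A B u v = leading_form A u * leading_form B v - leading_form A v * leading_form B u"

definition area :: "'a::field \<times> 'a \<Rightarrow> 'a \<times> 'a \<Rightarrow> 'a \<times> 'a \<Rightarrow> 'a" where
  "area p q r = (fst q - fst p) * (snd r - snd p) - (fst r - fst p) * (snd q - snd p)"

lemma conic_secant:
  fixes C :: "'a::field conic"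
  assumes "conic_eval C p = 0" "conic_eval C q = 0"
  shows "conic_dx C p * fst (q - p) + conic_dy C p * snd (q - p) = - leading_form C (q - p)"
proof -
  have "conic_eval C q - conic_eval C p
      = conic_dx C p * fst (q - p) + conic_dy C p * snd (q - p) + leading_form C (q - p)"
    unfolding conic_eval_def conic_dx_def conic_dy_def leading_form_def fst_diff snd_diff
    by algebra
  with assms show ?thesis
    by (simp add: eq_neg_iff_add_eq_0)
qed

lemma jacdet_mult_area:
  fixes A B :: "'a::field conic"
  assumes "conic_eval A p1 = 0" "conic_eval A p2 = 0" "conic_eval A p3 = 0"
    and "conic_eval B p1 = 0" "conic_eval B p2 = 0" "conic_eval B p3 = 0"
  shows "jacdet A B p1 * area p1 p2 p3 = leading_wedge A B (p2 - p1) (p3 - p1)"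
proof -
  have "jacdet A B p1 * area p1 p2 p3
      = (conic_dx A p1 * fst (p2 - p1) + conic_dy A p1 * snd (p2 - p1))
          * (conic_dx B p1 * fst (p3 - p1) + conic_dy B p1 * snd (p3 - p1))
      - (conic_dx A p1 * fst (p3 - p1) + conic_dy A p1 * snd (p3 - p1))
          * (conic_dx B p1 * fst (p2 - p1) + conic_dy B p1 * snd (p2 - p1))"
    unfolding jacdet_def area_def fst_diff snd_diff by algebra
  then show ?thesis
    unfolding conic_secant[OF assms(1,2)] conic_secant[OF assms(1,3)]
      conic_secant[OF assms(4,5)] conic_secant[OF assms(4,6)] leading_wedge_def
    by algebra
qed

lemma leading_form_scale: "leading_form C (s * a, s * b) = s * s * leading_form C (a, b)"
  unfolding leading_form_def by (simp add: algebra_simps)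

lemma proportional_if_cross_eq_0:
  fixes a1 a2 b1 b2 :: "'a::field"
  assumes "a1 * b2 - b1 * a2 = 0" "a1 \<noteq> 0 \<or> a2 \<noteq> 0"
  obtains s where "b1 = s * a1" "b2 = s * a2"
proof (cases "a1 = 0")
  case True
  with assms show ?thesis
    by (intro that[of "b2 / a2"]) auto
next
  case False
  with assms show ?thesis
    by (intro that[of "b1 / a1"]) (auto simp: field_simps)
qed

text \<open>A conic through three collinear points contains their line, so both gradients at \<open>p\<^sub>1\<close> are
  orthogonal to its direction.\<close>

lemma jacdet_eq_0_if_collinear:
  fixes A B :: "'a::field conic"
  assumes "conic_eval A p1 = 0" "conic_eval A p2 = 0" "conic_eval A p3 = 0"
    and "conic_eval B p1 = 0" "conic_eval B p2 = 0" "conic_eval B p3 = 0"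
    and "distinct [p1, p2, p3]" "area p1 p2 p3 = 0"
  shows "jacdet A B p1 = 0"
proof -
  define u where "u = p2 - p1"
  have "fst u \<noteq> 0 \<or> snd u \<noteq> 0"
    using assms(7) unfolding u_def by (auto simp: prod_eq_iff)
  then obtain s where s: "p3 - p1 = (s * fst u, s * snd u)"
    using assms(8) unfolding area_def u_def
    by (metis (no_types, lifting) fst_diff snd_diff prod.collapse proportional_if_cross_eq_0)
  have "s \<noteq> 0" "s \<noteq> 1"
    using s assms(7) unfolding u_def by (auto simp: prod_eq_iff)
  have tangent: "conic_dx C p1 * fst u + conic_dy C p1 * snd u = 0"
    if "conic_eval C p1 = 0" "conic_eval C p2 = 0" "conic_eval C p3 = 0" for C :: "'a conic"
  proof -
    have secant_u: "conic_dx C p1 * fst u + conic_dy C p1 * snd u = - leading_form C u"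
      using conic_secant[OF that(1,2)] unfolding u_def .
    have "s * (conic_dx C p1 * fst u + conic_dy C p1 * snd u) = - (s * s * leading_form C u)"
      using conic_secant[OF that(1,3)] unfolding s leading_form_scale
      by (simp add: algebra_simps)
    then have "s * (s - 1) * leading_form C u = 0"
      unfolding secant_u by (simp add: algebra_simps)
    then show ?thesis
      using secant_u \<open>s \<noteq> 0\<close> \<open>s \<noteq> 1\<close> by simp
  qed
  have "jacdet A B p1 * fst u = 0" "jacdet A B p1 * snd u = 0"
    using tangent[OF assms(1-3)] tangent[OF assms(4-6)] unfolding jacdet_def
    by algebra+
  with \<open>fst u \<noteq> 0 \<or> snd u \<noteq> 0\<close> show ?thesis
    by auto
qed

lemma area_swap_12: "area q p r = - area p q r"
  unfolding area_def by algebra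

lemma area_rotate: "area q r p = area p q r"
  unfolding area_def by algebra

text \<open>Laplace expansion, along the column \<open>f(p\<^sub>i)\<close>, of the determinant with rows
  \<open>(f(p\<^sub>i), 1, x\<^sub>i, y\<^sub>i)\<close>.\<close>

definition area_cofactor_sum ::
    "('a::field \<times> 'a \<Rightarrow> 'a) \<Rightarrow> 'a \<times> 'a \<Rightarrow> 'a \<times> 'a \<Rightarrow> 'a \<times> 'a \<Rightarrow> 'a \<times> 'a \<Rightarrow> 'a" where
  "area_cofactor_sum f p1 p2 p3 p4 =
     area p2 p3 p4 * f p1 - area p1 p3 p4 * f p2 + area p1 p2 p4 * f p3 - area p1 p2 p3 * f p4"

lemma area_cofactor_sum_affine:
  "area_cofactor_sum (\<lambda>w. c0 + c1 * fst w + c2 * snd w) p1 p2 p3 p4 = 0"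
  unfolding area_cofactor_sum_def area_def by algebra

lemma area_cofactor_sum_leading_coeffs:
  assumes "conic_eval C p1 = 0" "conic_eval C p2 = 0" "conic_eval C p3 = 0" "conic_eval C p4 = 0"
  shows "cxx C * area_cofactor_sum (\<lambda>w. fst w * fst w) p1 p2 p3 p4
       + cyy C * area_cofactor_sum (\<lambda>w. snd w * snd w) p1 p2 p3 p4
       + cxy C * area_cofactor_sum (\<lambda>w. fst w * snd w) p1 p2 p3 p4 = 0"
proof -
  have "cxx C * area_cofactor_sum (\<lambda>w. fst w * fst w) p1 p2 p3 p4
       + cyy C * area_cofactor_sum (\<lambda>w. snd w * snd w) p1 p2 p3 p4
       + cxy C * area_cofactor_sum (\<lambda>w. fst w * snd w) p1 p2 p3 p4
      = area_cofactor_sum (conic_eval C) p1 p2 p3 p4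
        - area_cofactor_sum (\<lambda>w. cst C + cx C * fst w + cy C * snd w) p1 p2 p3 p4"
    unfolding area_cofactor_sum_def conic_eval_def by algebra
  then show ?thesis
    using assms unfolding area_cofactor_sum_affine by (simp add: area_cofactor_sum_def)
qed

text \<open>The determinant with rows \<open>(l\<^sub>1, l\<^sub>2, l\<^sub>3)\<close>, \<open>(u\<^sub>1\<^sup>2, u\<^sub>2\<^sup>2, u\<^sub>1u\<^sub>2)\<close> and \<open>(v\<^sub>1\<^sup>2, v\<^sub>2\<^sup>2, v\<^sub>1v\<^sub>2)\<close>.\<close>

definition monomial_det :: "'a::field \<Rightarrow> 'a \<Rightarrow> 'a \<Rightarrow> 'a \<times> 'a \<Rightarrow> 'a \<times> 'a \<Rightarrow> 'a" where
  "monomial_det l1 l2 l3 u v =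
       l1 * (snd u * snd u * (fst v * snd v) - fst u * snd u * (snd v * snd v))
     - l2 * (fst u * fst u * (fst v * snd v) - fst u * snd u * (fst v * fst v))
     + l3 * (fst u * fst u * (snd v * snd v) - snd u * snd u * (fst v * fst v))"

text \<open>The leading coefficient vectors of \<open>A\<close> and \<open>B\<close> are both orthogonal to \<open>l\<close>, so their cross
  product, which computes \<open>leading_wedge\<close>, is parallel to \<open>l\<close>.\<close>

lemma leading_wedge_proportional:
  assumes "cxx A * l1 + cyy A * l2 + cxy A * l3 = 0" "cxx B * l1 + cyy B * l2 + cxy B * l3 = 0"
  shows "leading_wedge A B u v * monomial_det l1 l2 l3 s t
       = leading_wedge A B s t * monomial_det l1 l2 l3 u v"
  using assms unfolding leading_wedge_def leading_form_def monomial_det_def by algebra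

lemma monomial_det_area_cofactor_sums:
  fixes p1 p2 p3 p4 :: "'a::field \<times> 'a"
  defines "l1 \<equiv> area_cofactor_sum (\<lambda>w. fst w * fst w) p1 p2 p3 p4"
    and "l2 \<equiv> area_cofactor_sum (\<lambda>w. snd w * snd w) p1 p2 p3 p4"
    and "l3 \<equiv> area_cofactor_sum (\<lambda>w. fst w * snd w) p1 p2 p3 p4"
  shows "monomial_det l1 l2 l3 (p2 - p1) (p3 - p1) = (area p1 p2 p3)\<^sup>2 * area p1 p2 p4 * area p1 p3 p4"
    and "monomial_det l1 l2 l3 (p1 - p2) (p3 - p2) = (area p1 p2 p3)\<^sup>2 * area p1 p2 p4 * area p2 p3 p4"
  unfolding l1_def l2_def l3_def monomial_det_def area_cofactor_sum_def area_def fst_diff snd_diff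
  by algebra+

lemma jacdet_area_exchange:
  fixes A B :: "'a::field conic"
  assumes A: "conic_eval A p1 = 0" "conic_eval A p2 = 0" "conic_eval A p3 = 0" "conic_eval A p4 = 0"
    and B: "conic_eval B p1 = 0" "conic_eval B p2 = 0" "conic_eval B p3 = 0" "conic_eval B p4 = 0"
    and "area p1 p2 p3 \<noteq> 0" "area p1 p2 p4 \<noteq> 0"
  shows "jacdet A B p1 * area p2 p3 p4 = - jacdet A B p2 * area p1 p3 p4"
proof -
  have at_p1: "jacdet A B p1 * area p1 p2 p3 = leading_wedge A B (p2 - p1) (p3 - p1)"
    by (rule jacdet_mult_area) (use A B in auto)
  have at_p2: "- jacdet A B p2 * area p1 p2 p3 = leading_wedge A B (p1 - p2) (p3 - p2)"
    using jacdet_mult_area[of A p2 p1 p3 B] A B area_swap_12[of p2 p1 p3] by simp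
  have "leading_wedge A B (p2 - p1) (p3 - p1) * ((area p1 p2 p3)\<^sup>2 * area p1 p2 p4 * area p2 p3 p4)
      = leading_wedge A B (p1 - p2) (p3 - p2) * ((area p1 p2 p3)\<^sup>2 * area p1 p2 p4 * area p1 p3 p4)"
    using leading_wedge_proportional[OF area_cofactor_sum_leading_coeffs[OF A]
        area_cofactor_sum_leading_coeffs[OF B]]
    unfolding monomial_det_area_cofactor_sums[symmetric] by (simp add: mult.commute)
  then have "(jacdet A B p1 * area p2 p3 p4) * ((area p1 p2 p3)^3 * area p1 p2 p4)
      = (- jacdet A B p2 * area p1 p3 p4) * ((area p1 p2 p3)^3 * area p1 p2 p4)"
    unfolding at_p1[symmetric] at_p2[symmetric] by algebra
  moreover have "(area p1 p2 p3)^3 * area p1 p2 p4 \<noteq> 0"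
    using assms(9,10) by simp
  ultimately show ?thesis
    by (rule mult_right_cancel[THEN iffD1, rotated])
qed

lemma sum_lessThan_4: "(\<Sum>i<4. f i) = f 0 + f 1 + f 2 + f (3::nat)"
  by (simp add: eval_nat_numeral)

lemma euler_jacobi_conics:
  fixes A B :: "'a::field conic" and p :: "nat \<Rightarrow> 'a \<times> 'a"
  assumes "inj_on p {..<4}"
    and zero_A: "\<And>i. i < 4 \<Longrightarrow> conic_eval A (p i) = 0"
    and zero_B: "\<And>i. i < 4 \<Longrightarrow> conic_eval B (p i) = 0"
    and transversal: "\<And>i. i < 4 \<Longrightarrow> jacdet A B (p i) \<noteq> 0"
  shows "(\<Sum>i<4. (c0 + c1 * fst (p i) + c2 * snd (p i)) / jacdet A B (p i)) = 0"
proof -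
  define g where "g w = c0 + c1 * fst w + c2 * snd w" for w :: "'a \<times> 'a"
  define J where "J i = jacdet A B (p i)" for i
  have general_position: "area (p i) (p j) (p k) \<noteq> 0"
    if "i < 4" "j < 4" "k < 4" "distinct [i, j, k]" for i j k
    using jacdet_eq_0_if_collinear[of A "p i" "p j" "p k" B] that transversal[of i]
      zero_A zero_B inj_onD[OF assms(1)] by (auto simp: distinct_length_2_or_more)
  have exchange: "J i * area (p j) (p k) (p l) = - J j * area (p i) (p k) (p l)"
    if "i < 4" "j < 4" "k < 4" "l < 4" "distinct [i, j, k, l]" for i j k l
    unfolding J_def
    by (rule jacdet_area_exchange) (use that zero_A zero_B general_position in auto)
  define K where "K = J 0 * area (p 1) (p 2) (p 3)"
  have "K \<noteq> 0"
    unfolding K_def J_def using transversal[of 0] general_position[of 1 2 3] by simp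
  have K1: "K = - (J 1 * area (p 0) (p 2) (p 3))"
    using exchange[of 0 1 2 3] unfolding K_def by simp
  have K2: "K = J 2 * area (p 0) (p 1) (p 3)"
    using exchange[of 0 2 1 3] area_swap_12[of "p 2" "p 1" "p 3"] unfolding K_def by simp
  have K3: "K = - (J 3 * area (p 0) (p 1) (p 2))"
    using exchange[of 0 3 1 2] area_rotate[of "p 1" "p 2" "p 3"] unfolding K_def by simp
  have J_nonzero: "J i \<noteq> 0" if "i < 4" for i
    unfolding J_def using that transversal by simp
  have "(\<Sum>i<4. g (p i) / J i) * K = area_cofactor_sum g (p 0) (p 1) (p 2) (p 3)"
  proof -
    have "g (p 0) / J 0 * K = area (p 1) (p 2) (p 3) * g (p 0)"
      using J_nonzero[of 0] unfolding K_def by simp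
    moreover have "g (p 1) / J 1 * K = - (area (p 0) (p 2) (p 3) * g (p 1))"
      using J_nonzero[of 1] unfolding K1 by simp
    moreover have "g (p 2) / J 2 * K = area (p 0) (p 1) (p 3) * g (p 2)"
      using J_nonzero[of 2] unfolding K2 by simp
    moreover have "g (p 3) / J 3 * K = - (area (p 0) (p 1) (p 2) * g (p 3))"
      using J_nonzero[of 3] unfolding K3 by simp
    ultimately show ?thesis
      unfolding sum_lessThan_4 area_cofactor_sum_def by (simp add: algebra_simps)
  qed
  then show ?thesis
    using \<open>K \<noteq> 0\<close> unfolding g_def J_def area_cofactor_sum_affine by simp
qed

lemma fixed_off_iff:
  "fixed_off Lh Ph Qh q \<longleftrightarrow>
     aff Ph (fst q) (snd q) = 0 \<and> aff Qh (fst q) (snd q) = 0 \<and> aff Lh (fst q) (snd q) \<noteq> 0"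
  unfolding fixed_off_def aff_def by (auto simp: algebra_simps)

definition partially_differentiable :: "(complex \<Rightarrow> complex \<Rightarrow> complex) \<Rightarrow> complex \<times> complex \<Rightarrow> bool" where
  "partially_differentiable g q \<longleftrightarrow>
     (\<lambda>s. g s (snd q)) field_differentiable at (fst q) \<and> (\<lambda>s. g (fst q) s) field_differentiable at (snd q)"

lemma deriv_minus_quotient_at_zero:
  fixes f g h :: "complex \<Rightarrow> complex"
  assumes "(h has_field_derivative h') (at t)" "f field_differentiable at t" "g field_differentiable at t"
    and "f t = 0" "g t \<noteq> 0"
  shows "deriv (\<lambda>s. h s - f s / g s) t = h' - deriv f t / g t"
proof -
  have "((\<lambda>s. h s - f s / g s) has_field_derivative
          h' - (deriv f t * g t - f t * deriv g t) / (g t * g t)) (at t)"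
    using assms by (intro derivative_intros) (auto simp: field_differentiable_derivI)
  then show ?thesis
    using assms(4,5) by (simp add: DERIV_imp_deriv)
qed

lemma jac_eq_mat_mult_Df:
  assumes "partially_differentiable (aff Lh) q" "partially_differentiable (aff Ph) q"
    "partially_differentiable (aff Qh) q"
    and "aff Ph (fst q) (snd q) = 0" "aff Qh (fst q) (snd q) = 0" "aff Lh (fst q) (snd q) \<noteq> 0"
  shows "jac (aff Ph) (aff Qh) q = mat (aff Lh (fst q) (snd q)) ** (mat 1 - Df Lh Ph Qh q)"
proof -
  obtain x y where q: "q = (x, y)"
    by fastforce
  let ?L = "aff Lh x y"
  have d: "pd1 (\<lambda>x y. x - aff Ph x y / aff Lh x y) q = 1 - pd1 (aff Ph) q / ?L"
    "pd2 (\<lambda>x y. x - aff Ph x y / aff Lh x y) q = 0 - pd2 (aff Ph) q / ?L"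
    "pd1 (\<lambda>x y. y - aff Qh x y / aff Lh x y) q = 0 - pd1 (aff Qh) q / ?L"
    "pd2 (\<lambda>x y. y - aff Qh x y / aff Lh x y) q = 1 - pd2 (aff Qh) q / ?L"
    unfolding q pd1_def pd2_def fst_conv snd_conv
    by (rule deriv_minus_quotient_at_zero;
        use assms in \<open>auto intro: derivative_eq_intros simp: q partially_differentiable_def\<close>)+
  show ?thesis
    using assms(6) unfolding q
    by (simp add: vec_eq_iff forall_2 Df_def jac_def d[unfolded q] matrix_matrix_mult_def sum_2 mat_def
        field_simps)
qed

lemma det_mat_mult_2: "det (mat c ** (M :: 'a::comm_ring_1^2^2)) = c\<^sup>2 * det M"
  by (simp add: det_2 matrix_matrix_mult_def mat_def sum_2 power2_eq_square algebra_simps)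

lemma trace_mat_mult_2: "trace (mat c ** (M :: 'a::comm_ring_1^2^2)) = c * trace M"
  by (simp add: trace_def matrix_matrix_mult_def mat_def sum_2 algebra_simps)

lemma conic_eval_has_derivative_fst:
  "((\<lambda>s. conic_eval C (s, y)) has_field_derivative conic_dx C (x, y)) (at x)"
  unfolding conic_eval_def conic_dx_def by (auto intro!: derivative_eq_intros simp: algebra_simps)

lemma conic_eval_has_derivative_snd:
  "((\<lambda>s. conic_eval C (x, s)) has_field_derivative conic_dy C (x, y)) (at y)"
  unfolding conic_eval_def conic_dy_def by (auto intro!: derivative_eq_intros simp: algebra_simps)

lemma partially_differentiable_conic: "partially_differentiable (\<lambda>x y. conic_eval C (x, y)) q"
  unfolding partially_differentiable_def
  using conic_eval_has_derivative_fst conic_eval_has_derivative_snd field_differentiable_def by blast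

lemma jac_conics:
  "jac (\<lambda>x y. conic_eval A (x, y)) (\<lambda>x y. conic_eval B (x, y)) q =
     (\<chi> i j. if i = 1 then (if j = 1 then conic_dx A q else conic_dy A q)
             else (if j = 1 then conic_dx B q else conic_dy B q))"
  by (cases q) (simp add: vec_eq_iff forall_2 jac_def pd1_def pd2_def
      DERIV_imp_deriv[OF conic_eval_has_derivative_fst] DERIV_imp_deriv[OF conic_eval_has_derivative_snd])

lemma quad_form3_aff_conic:
  assumes "quad_form3 F"
  obtains C where "aff F = (\<lambda>x y. conic_eval C (x, y))"
proof -
  obtain c1 c2 c3 c4 c5 c6 where "\<And>u v w.
      F u v w = c1 * u * u + c2 * v * v + c3 * w * w + c4 * u * v + c5 * u * w + c6 * v * w"
    using assms unfolding quad_form3_def by blast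
  then have "aff F = (\<lambda>x y. conic_eval \<lparr>cst = c1, cx = c4, cy = c5, cxx = c2, cyy = c3, cxy = c6\<rparr> (x, y))"
    by (simp add: fun_eq_iff aff_def conic_eval_def)
  then show ?thesis ..
qed

lemma lin_form3_aff_conic:
  assumes "lin_form3 F"
  obtains a b c where "aff F = (\<lambda>x y. conic_eval \<lparr>cst = a, cx = b, cy = c, cxx = 0, cyy = 0, cxy = 0\<rparr> (x, y))"
proof -
  obtain a1 a2 a3 where "\<And>u v w. F u v w = a1 * u + a2 * v + a3 * w"
    using assms unfolding lin_form3_def by blast
  then show ?thesis
    by (intro that[of a1 a2 a3]) (simp add: fun_eq_iff aff_def conic_eval_def)
qed

lemma fixed_point_linearization:
  assumes P: "aff Ph = (\<lambda>x y. conic_eval A (x, y))" and Q: "aff Qh = (\<lambda>x y. conic_eval B (x, y))"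
    and L: "aff Lh = (\<lambda>x y. conic_eval C (x, y))"
    and "fixed_off Lh Ph Qh q"
  defines "l \<equiv> aff Lh (fst q) (snd q)" and "M \<equiv> mat 1 - Df Lh Ph Qh q"
  shows "conic_eval A q = 0" "conic_eval B q = 0" "l \<noteq> 0"
    and "jac (aff Ph) (aff Qh) q = mat l ** M"
    and "det M = jacdet A B q / l\<^sup>2"
    and "trace M * l = conic_dx A q + conic_dy B q"
    and "g / (l\<^sup>2 * det M) = g / jacdet A B q"
    and "g / (l * det M) = g * l / jacdet A B q"
proof -
  show zeros: "conic_eval A q = 0" "conic_eval B q = 0" "l \<noteq> 0"
    using assms(4) unfolding fixed_off_iff P Q l_def by simp_all
  show jac: "jac (aff Ph) (aff Qh) q = mat l ** M"
    using jac_eq_mat_mult_Df[of Lh q Ph Qh] zeros unfolding l_def M_def P Q L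
    by (simp add: partially_differentiable_conic)
  show det: "det M = jacdet A B q / l\<^sup>2"
    using arg_cong[OF jac, of det] zeros(3)
    unfolding det_mat_mult_2 P Q jac_conics by (simp add: det_2 jacdet_def field_simps)
  show "trace M * l = conic_dx A q + conic_dy B q"
    using arg_cong[OF jac, of trace]
    unfolding trace_mat_mult_2 P Q jac_conics by (simp add: trace_def sum_2 mult.commute)
  show "g / (l\<^sup>2 * det M) = g / jacdet A B q" "g / (l * det M) = g * l / jacdet A B q"
    using zeros(3) unfolding det by (simp_all add: power2_eq_square field_simps)
qed

theorem mainTheorem6:
  fixes Lh Ph Qh :: "complex \<Rightarrow> complex \<Rightarrow> complex \<Rightarrow> complex"
    and p :: "nat \<Rightarrow> complex \<times> complex"
  assumes "lin_form3 Lh" and "quad_form3 Ph" and "quad_form3 Qh"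
    and "holo_map Lh Ph Qh"
    and "inj_on p {..<4}"
    and "{q. fixed_off Lh Ph Qh q} = p ` {..<4}"
    and "\<forall>i<4. nondeg Lh Ph Qh (p i)"
  shows "(\<forall>i<4. aff Ph (fst (p i)) (snd (p i)) = 0 \<and> aff Qh (fst (p i)) (snd (p i)) = 0
           \<and> aff Lh (fst (p i)) (snd (p i)) \<noteq> 0
           \<and> jac (aff Ph) (aff Qh) (p i)
               = mat (aff Lh (fst (p i)) (snd (p i))) ** (mat 1 - Df Lh Ph Qh (p i)))
    \<and> (\<Sum>i<4. 1 / ((aff Lh (fst (p i)) (snd (p i)))\<^sup>2 * det (mat 1 - Df Lh Ph Qh (p i)))) = 0
    \<and> (\<Sum>i<4. fst (p i) / ((aff Lh (fst (p i)) (snd (p i)))\<^sup>2 * det (mat 1 - Df Lh Ph Qh (p i)))) = 0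
    \<and> (\<Sum>i<4. snd (p i) / ((aff Lh (fst (p i)) (snd (p i)))\<^sup>2 * det (mat 1 - Df Lh Ph Qh (p i)))) = 0
    \<and> (\<Sum>i<4. trace (mat 1 - Df Lh Ph Qh (p i)) / (aff Lh (fst (p i)) (snd (p i)) * det (mat 1 - Df Lh Ph Qh (p i)))) = 0
    \<and> (\<Sum>i<4. 1 / (aff Lh (fst (p i)) (snd (p i)) * det (mat 1 - Df Lh Ph Qh (p i)))) = 0"
proof -
  obtain A B where P: "aff Ph = (\<lambda>x y. conic_eval A (x, y))" and Q: "aff Qh = (\<lambda>x y. conic_eval B (x, y))"
    using quad_form3_aff_conic assms(2,3) by metis
  obtain a b c where L: "aff Lh = (\<lambda>x y. conic_eval \<lparr>cst = a, cx = b, cy = c, cxx = 0, cyy = 0, cxy = 0\<rparr> (x, y))"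
    using lin_form3_aff_conic assms(1) by metis
  have L_affine: "aff Lh (fst q) (snd q) = a + b * fst q + c * snd q" for q
    unfolding L by (simp add: conic_eval_def)
  have fixed: "fixed_off Lh Ph Qh (p i)" if "i < 4" for i
    using assms(6) that by blast
  note lin = fixed_point_linearization[OF P Q L fixed]
  have transversal: "jacdet A B (p i) \<noteq> 0" if "i < 4" for i
    using assms(7) lin(3,5)[OF that] that unfolding nondeg_def by auto
  have EJ: "(\<Sum>i<4. (c0 + c1 * fst (p i) + c2 * snd (p i)) / jacdet A B (p i)) = 0" for c0 c1 c2
    by (rule euler_jacobi_conics) (use assms(5) lin transversal in auto)
  have trace_numerator: "conic_dx A q + conic_dy B q
      = (cx A + cy B) + (2 * cxx A + cxy B) * fst q + (cxy A + 2 * cyy B) * snd q" for q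
    unfolding conic_dx_def conic_dy_def by (simp add: algebra_simps)
  have pointwise: "\<forall>i<4. aff Ph (fst (p i)) (snd (p i)) = 0 \<and> aff Qh (fst (p i)) (snd (p i)) = 0
      \<and> aff Lh (fst (p i)) (snd (p i)) \<noteq> 0
      \<and> jac (aff Ph) (aff Qh) (p i) = mat (aff Lh (fst (p i)) (snd (p i))) ** (mat 1 - Df Lh Ph Qh (p i))"
    using lin unfolding P Q by simp
  show ?thesis
    using pointwise EJ[of 1 0 0] EJ[of 0 1 0] EJ[of 0 0 1] EJ[of a b c, folded L_affine]
      EJ[of "cx A + cy B" "2 * cxx A + cxy B" "cxy A + 2 * cyy B"]
    by (simp add: lin(7,8) lin(6)[unfolded trace_numerator])
qed

end
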